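(* Let $N$ be a positive odd integer, $\alpha,\beta$ real with $((\alpha+1)/2)_k\neq0$ and $((\alpha+3)/2)_k\ne0$ for $k\le (N-1)/2$, and put $\eta=\tfrac{\alpha+\beta+2}{4}$. Let $P_n$ be the monic dual $-1$ Hahn polynomials defined in the context. Then, as polynomial identities in $x$, for $0\le n\le (N-1)/2$: $$P_{2n}(x-1)=16^n\left(\tfrac{1-N}{2}\right)_n\left(\tfrac{\alpha+1}{2}\right)_n\;{}_3F_2\!\left(\begin{matrix}-n,\ \eta+\tfrac x4,\ \eta-\tfrac x4\\ -\tfrac{N-1}{2},\ \tfrac{\alpha+1}{2}\end{matrix};1\right),$$ $$P_{2n+1}(x-1)=16^n\left(\tfrac{1-N}{2}\right)_n\left(\tfrac{\alpha+3}{2}\right)_n\,(x+\alpha-\beta)\;{}_3F_2\!\left(\begin{matrix}-n,\ \eta+\tfrac x4,\ \eta-\tfrac x4\\ -\tfrac{N-1}{2},\ \tfrac{\alpha+3}{2}\end{matrix};1\right).$$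
   Context: $(c)_k=c(c+1)\cdots(c+k-1)$, $(c)_0=1$, and ${}_3F_2\!\left(\begin{matrix}-n,a_2,a_3\\ b_1,b_2\end{matrix};1\right)=\sum_{k=0}^n\frac{(-n)_k(a_2)_k(a_3)_k}{(b_1)_k(b_2)_k\,k!}$. For $N$ odd: $b_n^{(-1)}=-1-\alpha+\beta$ for $n$ even, $b_n^{(-1)}=-1+\alpha-\beta$ for $n$ odd; $u_n^{(-1)}=4n(N+1-n)$ for $n$ even, $u_n^{(-1)}=4(\alpha+n)(\beta+N+1-n)$ for $n$ odd. The monic dual $-1$ Hahn polynomials are defined by $P_{-1}=0$, $P_0=1$, $P_{n+1}(x)=(x-b_n^{(-1)})P_n(x)-u_n^{(-1)}P_{n-1}(x)$ for $n\ge0$. *)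

theory Defs
  imports Complex_Main
begin

definition bcoef :: "real \<Rightarrow> real \<Rightarrow> nat \<Rightarrow> real" where
  "bcoef \<alpha> \<beta> n = (if even n then -1 - \<alpha> + \<beta> else -1 + \<alpha> - \<beta>)"

definition ucoef :: "real \<Rightarrow> real \<Rightarrow> nat \<Rightarrow> nat \<Rightarrow> real" where
  "ucoef \<alpha> \<beta> N n = (if even n then 4 * real n * (real N + 1 - real n)
                        else 4 * (\<alpha> + real n) * (\<beta> + real N + 1 - real n))"

text \<open>Monic dual -1 Hahn polynomial P_n evaluated at x:
  P_0 = 1, P_1 = x - b_0 (since P_{-1} = 0),
  P_{n+2} = (x - b_{n+1}) P_{n+1} - u_{n+1} P_n.\<close>
fun dmH :: "real \<Rightarrow> real \<Rightarrow> nat \<Rightarrow> nat \<Rightarrow> real \<Rightarrow> real" where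
  "dmH \<alpha> \<beta> N 0 x = 1"
| "dmH \<alpha> \<beta> N (Suc 0) x = x - bcoef \<alpha> \<beta> 0"
| "dmH \<alpha> \<beta> N (Suc (Suc n)) x =
     (x - bcoef \<alpha> \<beta> (Suc n)) * dmH \<alpha> \<beta> N (Suc n) x
     - ucoef \<alpha> \<beta> N (Suc n) * dmH \<alpha> \<beta> N n x"

definition hyp3F2 :: "nat \<Rightarrow> real \<Rightarrow> real \<Rightarrow> real \<Rightarrow> real \<Rightarrow> real" where
  "hyp3F2 n a2 a3 b1 b2 =
     (\<Sum>k=0..n. pochhammer (- real n) k * pochhammer a2 k * pochhammer a3 k
                 / (pochhammer b1 k * pochhammer b2 k * fact k))"

end

theory Submission
  imports Defs
begin

(* Proof idea.  Write M = (N - 1)/2, A = (alpha + 1)/2, B = (beta + 1)/2 and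
   a, b = (alpha + beta + 2)/4 +- x/4.  Clearing the denominators of the terminating
   3F2 gives the polynomial

     S(M, A; n) = sum_k (-1)^k C(n,k) (k - M)_(n-k) (A + k)_(n-k) (a)_k (b)_k
                = (-M)_n (A)_n 3F2(-n, a, b; -M, A; 1),

   which makes sense for every real M and A.  Two contiguous relations hold for it:
     S(M, A+1; n+1) = S(M, A; n+1) - (n+1)(M-n) S(M, A+1; n),
     S(M, A; n+1)   = t S(M, A+1; n) - (A+n)(B+M-n) S(M, A; n),
   the second whenever (a+k)(b+k) = (A+k)(B+k) - t for all k.  Both follow
   coefficientwise from Pascal/absorption identities for binomials and the
   recursion of the Pochhammer symbol.  Taking the recurrence of the monic dual -1
   Hahn polynomials two steps at a time (even and odd index), these relations show by
   induction that P_2n(x-1) = 16^n S(M, A; n) and P_2n+1(x-1) = 16^n (x+alpha-beta)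
   S(M, A+1; n).  Finally, for M a natural number >= n and nonvanishing (A)_k, the
   sum S is exactly the normalised 3F2 of the statement. *)

definition hahn_coeff :: "real \<Rightarrow> real \<Rightarrow> nat \<Rightarrow> nat \<Rightarrow> real" where
  "hahn_coeff M A n k =
     (-1) ^ k * real (n choose k) * pochhammer (real k - M) (n - k) * pochhammer (A + real k) (n - k)"

(* The binomial factor makes the coefficients vanish beyond the degree n. *)
lemma hahn_coeff_beyond: "n < k \<Longrightarrow> hahn_coeff M A n k = 0"
  by (simp add: hahn_coeff_def)

lemma binomial_absorption_real:
  "real (Suc j) * real (n choose Suc j) = (real n - real j) * real (n choose j)"
proof (cases "j \<le> n")
  case True
  have "Suc j * (n choose Suc j) = (n - j) * (n choose j)"
    by (metis binomial_absorption binomial_absorb_comp)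
  then show ?thesis using True by (metis of_nat_diff of_nat_mult)
next
  case False
  then show ?thesis by (simp add: binomial_eq_0)
qed

(* Raising the lower parameter A by one trades a factor (A+n) for (A+k):
   both sides equal the same product with (A+k)_(n-k+1). *)
lemma hahn_coeff_param_shift:
  "(A + real k) * hahn_coeff M (A + 1) n k = (A + real n) * hahn_coeff M A n k"
proof (cases "k \<le> n")
  case True
  then obtain m where n: "n = k + m" using le_Suc_ex by blast
  have "(A + real k) * pochhammer (A + 1 + real k) m = pochhammer (A + real k) (Suc m)"
    by (simp add: pochhammer_rec add_ac)
  also have "\<dots> = (A + real n) * pochhammer (A + real k) m"
    by (simp add: pochhammer_Suc n add_ac mult.commute)
  finally have "(A + real k) * pochhammer (A + 1 + real k) m = (A + real n) * pochhammer (A + real k) m" .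
  then show ?thesis unfolding hahn_coeff_def n by (simp add: add_ac)
qed (simp add: hahn_coeff_def)

lemma hahn_coeff_Suc_factor:
  assumes "n = k + m"
  shows "hahn_coeff M A (Suc n) k =
    (-1) ^ k * real (Suc n choose k) * pochhammer (real k - M) m * (real n - M)
      * pochhammer (A + real k) (Suc m)"
proof -
  have "pochhammer (real k - M) (Suc m) = pochhammer (real k - M) m * (real n - M)"
    by (simp add: pochhammer_Suc assms)
  moreover have "Suc n - k = Suc m" using assms by simp
  ultimately show ?thesis by (simp add: hahn_coeff_def)
qed

(* Coefficientwise form of the first contiguous relation; after factoring,
   it reduces to (n+1-k) C(n+1,k) = (n+1) C(n,k). *)
lemma hahn_coeff_step_param:
  "hahn_coeff M (A + 1) (Suc n) k =
     hahn_coeff M A (Suc n) k - (real n + 1) * (M - real n) * hahn_coeff M (A + 1) n k"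
proof (cases "k \<le> n")
  case True
  then obtain m where n: "n = k + m" using le_Suc_ex by blast
  define P where "P = pochhammer (real k - M) m"
  define Q where "Q = pochhammer (A + 1 + real k) m"
  have "real (Suc n - k) * real (Suc n choose k) = real (Suc n) * real (n choose k)"
    by (metis binomial_absorb_comp diff_Suc_1 of_nat_mult)
  then have absorb: "real (Suc n choose k) * (A + 1 + real n)
      = real (Suc n choose k) * (A + real k) + (real n + 1) * real (n choose k)"
    using n by (simp add: algebra_simps)
  have "hahn_coeff M (A + 1) (Suc n) k
      = (-1) ^ k * P * Q * (real n - M) * (real (Suc n choose k) * (A + 1 + real n))"
    unfolding hahn_coeff_Suc_factor[OF n] by (simp add: P_def Q_def pochhammer_Suc n ac_simps)
  also have "\<dots> = (-1) ^ k * P * Q * (real n - M)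
      * (real (Suc n choose k) * (A + real k) + (real n + 1) * real (n choose k))"
    by (simp only: absorb)
  also have "\<dots> = hahn_coeff M A (Suc n) k - (real n + 1) * (M - real n) * hahn_coeff M (A + 1) n k"
    unfolding hahn_coeff_Suc_factor[OF n]
    by (simp add: P_def Q_def pochhammer_rec hahn_coeff_def n algebra_simps)
  finally show ?thesis .
qed (simp add: hahn_coeff_def)

lemma binomial_pascal_weighted:
  "real (Suc n choose k) * (real n - M) = real (n choose k) * (real k + real n - M)
     + (if k = 0 then 0 else real (n choose (k - 1)) * (real k - 1 - M))"
proof (cases k)
  case (Suc j)
  have "real (Suc n choose k) = real (n choose k) + real (n choose j)"
    using Suc by simp
  with Suc binomial_absorption_real[of j n] show ?thesis by (simp add: algebra_simps)
qed simp

lemma hahn_coeff_step_degree: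
  "hahn_coeff M A (Suc n) k =
     (real k + real n - M) * (A + real k) * hahn_coeff M (A + 1) n k
     - (if k = 0 then 0 else hahn_coeff M (A + 1) n (k - 1))"
proof (cases "k \<le> n")
  case True
  then obtain m where n: "n = k + m" using le_Suc_ex by blast
  define P where "P = pochhammer (real k - M) m"
  define Q where "Q = pochhammer (A + 1 + real k) m"
  define W where "W = (if k = 0 then 0 else real (n choose (k - 1)) * (real k - 1 - M))"
  have shifted: "(if k = 0 then 0 else hahn_coeff M (A + 1) n (k - 1))
      = - ((-1) ^ k * P * (A + real k) * Q * W)"
  proof (cases k)
    case (Suc j)
    have "pochhammer (real j - M) (Suc m) = (real k - 1 - M) * P"
      unfolding P_def pochhammer_rec Suc by (simp add: algebra_simps)
    moreover have "pochhammer (A + 1 + real j) (Suc m) = (A + real k) * Q"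
      unfolding Q_def pochhammer_rec Suc by (simp add: algebra_simps)
    moreover have "n - j = Suc m" using n Suc by simp
    ultimately show ?thesis by (simp add: hahn_coeff_def W_def Suc)
  qed (simp add: W_def)
  have "hahn_coeff M A (Suc n) k
      = (-1) ^ k * P * (A + real k) * Q * (real (Suc n choose k) * (real n - M))"
    unfolding hahn_coeff_Suc_factor[OF n] by (simp add: P_def Q_def pochhammer_rec ac_simps)
  also have "\<dots> = (-1) ^ k * P * (A + real k) * Q
      * (real (n choose k) * (real k + real n - M) + W)"
    by (simp only: binomial_pascal_weighted W_def)
  also have "\<dots> = (real k + real n - M) * (A + real k) * hahn_coeff M (A + 1) n k
      - (if k = 0 then 0 else hahn_coeff M (A + 1) n (k - 1))"
    unfolding shifted by (simp add: hahn_coeff_def n P_def Q_def algebra_simps)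
  finally show ?thesis .
next
  case False
  then consider "k = Suc n" | "Suc n < k" by linarith
  then show ?thesis
    by cases (simp add: hahn_coeff_def, simp add: hahn_coeff_beyond)
qed

definition poch_pair :: "real \<Rightarrow> real \<Rightarrow> nat \<Rightarrow> real" where
  "poch_pair a b k = pochhammer a k * pochhammer b k"

(* S(M, A; n) = (-M)_n (A)_n 3F2(-n, a, b; -M, A; 1) with cleared denominators. *)
definition hahn_sum :: "real \<Rightarrow> real \<Rightarrow> real \<Rightarrow> real \<Rightarrow> nat \<Rightarrow> real" where
  "hahn_sum M A a b n = (\<Sum>k\<le>n. hahn_coeff M A n k * poch_pair a b k)"

lemma poch_pair_Suc: "poch_pair a b (Suc k) = poch_pair a b k * ((a + real k) * (b + real k))"
  by (simp add: poch_pair_def pochhammer_Suc ac_simps)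

lemma hahn_sum_extend: "(\<Sum>k\<le>Suc n. hahn_coeff M A n k * poch_pair a b k) = hahn_sum M A a b n"
  by (simp add: hahn_sum_def hahn_coeff_beyond)

lemma hahn_sum_contiguous_param:
  "hahn_sum M (A + 1) a b (Suc n) =
     hahn_sum M A a b (Suc n) - (real n + 1) * (M - real n) * hahn_sum M (A + 1) a b n"
proof -
  have "hahn_sum M (A + 1) a b (Suc n) = (\<Sum>k\<le>Suc n. (hahn_coeff M A (Suc n) k
      - (real n + 1) * (M - real n) * hahn_coeff M (A + 1) n k) * poch_pair a b k)"
    unfolding hahn_sum_def hahn_coeff_step_param ..
  also have "\<dots> = hahn_sum M A a b (Suc n) - (real n + 1) * (M - real n)
      * (\<Sum>k\<le>Suc n. hahn_coeff M (A + 1) n k * poch_pair a b k)"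
    unfolding hahn_sum_def
    by (simp only: left_diff_distrib sum_subtractf sum_distrib_left mult.assoc)
  finally show ?thesis unfolding hahn_sum_extend .
qed

(* The shifted sum
   coming from position k-1 is rewritten with (a)_(k+1)(b)_(k+1) = (a)_k(b)_k (a+k)(b+k). *)
lemma hahn_sum_three_term:
  assumes quad: "\<And>k. (a + real k) * (b + real k) = (A + real k) * (B + real k) - t"
  shows "hahn_sum M A a b (Suc n) =
     t * hahn_sum M (A + 1) a b n - (A + real n) * (B + M - real n) * hahn_sum M A a b n"
proof -
  let ?c = "hahn_coeff M (A + 1) n" and ?q = "poch_pair a b"
  have index_shift: "(\<Sum>k\<le>Suc n. (if k = 0 then 0 else ?c (k - 1)) * ?q k)
      = (\<Sum>k\<le>n. ?c k * ?q (Suc k))"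
    by (subst sum.atMost_Suc_shift) simp
  have "hahn_sum M A a b (Suc n) = (\<Sum>k\<le>Suc n. (real k + real n - M) * (A + real k) * ?c k * ?q k)
      - (\<Sum>k\<le>Suc n. (if k = 0 then 0 else ?c (k - 1)) * ?q k)"
    unfolding hahn_sum_def hahn_coeff_step_degree by (simp add: left_diff_distrib sum_subtractf)
  also have "\<dots> = (\<Sum>k\<le>n. (real k + real n - M) * (A + real k) * ?c k * ?q k)
      - (\<Sum>k\<le>n. ?c k * ?q (Suc k))"
    unfolding index_shift by (simp add: hahn_coeff_beyond)
  also have "\<dots> = (\<Sum>k\<le>n. ?c k * ?q k * (t - (A + real k) * (B + M - real n)))"
    unfolding poch_pair_Suc quad by (simp add: sum_subtractf[symmetric] algebra_simps)
  also have "\<dots> = t * hahn_sum M (A + 1) a b n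
      - (B + M - real n) * (\<Sum>k\<le>n. (A + real k) * ?c k * ?q k)"
    unfolding hahn_sum_def by (simp add: sum_distrib_left sum_subtractf sum.distrib algebra_simps)
  also have "\<dots> = t * hahn_sum M (A + 1) a b n - (B + M - real n) * ((A + real n) * hahn_sum M A a b n)"
    unfolding hahn_coeff_param_shift hahn_sum_def by (simp add: sum_distrib_left mult.assoc)
  finally show ?thesis by (simp add: ac_simps)
qed

(* The recurrence producing P_(2n+2): b_(2n+1) and u_(2n+1) take their odd-index values. *)
lemma dmH_even_step:
  "dmH \<alpha> \<beta> N (2 * n + 2) y = (y + 1 - \<alpha> + \<beta>) * dmH \<alpha> \<beta> N (2 * n + 1) y
      - 4 * (\<alpha> + 2 * real n + 1) * (\<beta> + real N - 2 * real n) * dmH \<alpha> \<beta> N (2 * n) y"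
proof -
  have "2 * n + 2 = Suc (Suc (2 * n))" by simp
  then show ?thesis by (simp add: bcoef_def ucoef_def algebra_simps)
qed

(* The recurrence producing P_(2n+3): b_(2n+2) and u_(2n+2) take their even-index values. *)
lemma dmH_odd_step:
  "dmH \<alpha> \<beta> N (2 * n + 3) y = (y + 1 + \<alpha> - \<beta>) * dmH \<alpha> \<beta> N (2 * n + 2) y
      - 4 * (2 * real n + 2) * (real N - 1 - 2 * real n) * dmH \<alpha> \<beta> N (2 * n + 1) y"
proof -
  have three: "2 * n + 3 = Suc (Suc (2 * n + 1))" by simp
  show ?thesis unfolding three dmH.simps(3)
    by (simp add: bcoef_def ucoef_def algebra_simps del: dmH.simps)
qed

(* Main identity in cleared-denominator form, for arbitrary real M with N = 2M+1:
   the two contiguous relations are exactly the recurrence taken two steps at a time. *)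
lemma dmH_as_hahn_sum:
  fixes \<alpha> \<beta> x M :: real
  assumes N: "real N = 2 * M + 1"
  defines "A \<equiv> (\<alpha> + 1) / 2" and "B \<equiv> (\<beta> + 1) / 2"
    and "a \<equiv> (\<alpha> + \<beta> + 2) / 4 + x / 4" and "b \<equiv> (\<alpha> + \<beta> + 2) / 4 - x / 4"
  shows "dmH \<alpha> \<beta> N (2 * n) (x - 1) = 16 ^ n * hahn_sum M A a b n
       \<and> dmH \<alpha> \<beta> N (2 * n + 1) (x - 1) = 16 ^ n * (x + \<alpha> - \<beta>) * hahn_sum M (A + 1) a b n"
proof (induction n)
  case 0
  then show ?case by (simp add: hahn_sum_def hahn_coeff_def poch_pair_def bcoef_def)
next
  case (Suc n)
  then have even: "dmH \<alpha> \<beta> N (2 * n) (x - 1) = 16 ^ n * hahn_sum M A a b n"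
    and odd: "dmH \<alpha> \<beta> N (2 * n + 1) (x - 1) = 16 ^ n * (x + \<alpha> - \<beta>) * hahn_sum M (A + 1) a b n"
    by simp_all
  define t where "t = (x - \<alpha> + \<beta>) * (x + \<alpha> - \<beta>) / 16"
  have quad: "(a + real k) * (b + real k) = (A + real k) * (B + real k) - t" for k
    unfolding a_def b_def A_def B_def t_def by (simp add: field_simps)
  have even': "dmH \<alpha> \<beta> N (2 * n + 2) (x - 1) = 16 ^ Suc n * hahn_sum M A a b (Suc n)"
    unfolding dmH_even_step even odd hahn_sum_three_term[OF quad] N
    by (simp add: t_def A_def B_def field_simps)
  have odd': "dmH \<alpha> \<beta> N (2 * n + 3) (x - 1)
      = 16 ^ Suc n * (x + \<alpha> - \<beta>) * hahn_sum M (A + 1) a b (Suc n)"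
    unfolding dmH_odd_step even' odd hahn_sum_contiguous_param N
    by (simp add: algebra_simps)
  show ?case using even' odd' by (simp add: numeral_eq_Suc)
qed

lemma pochhammer_minus_nat:
  "pochhammer (- real n) k = (-1) ^ k * real (n choose k) * fact k"
proof -
  have "real (n choose k) = (-1) ^ k * pochhammer (- real n) k / fact k"
    by (simp add: binomial_gbinomial gbinomial_pochhammer)
  then have "(-1) ^ k * real (n choose k) * fact k = ((-1) ^ k * (-1) ^ k) * pochhammer (- real n) k"
    by simp
  also have "\<dots> = pochhammer (- real n) k" by (simp flip: power_mult_distrib)
  finally show ?thesis by simp
qed

(* For a nonnegative integer M >= n and nonvanishing (A)_k the denominators can be
   cleared termwise, since (-M)_n = (-M)_k (k-M)_(n-k) and (A)_n = (A)_k (A+k)_(n-k). *)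
lemma hyp3F2_as_hahn_sum:
  assumes "n \<le> M" and "\<forall>k\<le>n. pochhammer A k \<noteq> 0"
  shows "pochhammer (- real M) n * pochhammer A n * hyp3F2 n a b (- real M) A
    = hahn_sum (real M) A a b n"
  unfolding hyp3F2_def hahn_sum_def sum_distrib_left atLeast0AtMost
proof (rule sum.cong[OF refl])
  fix k assume "k \<in> {..n}"
  then have "k \<le> n" by simp
  then have "pochhammer (- real M) k \<noteq> 0" and "pochhammer A k \<noteq> 0"
    using assms by (auto simp: pochhammer_eq_0_iff)
  moreover have "pochhammer (- real M) n = pochhammer (- real M) k * pochhammer (real k - real M) (n - k)"
    using pochhammer_product[OF \<open>k \<le> n\<close>, of "- real M"] by (simp add: algebra_simps)
  moreover have "pochhammer A n = pochhammer A k * pochhammer (A + real k) (n - k)"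
    using pochhammer_product[OF \<open>k \<le> n\<close>, of A] by simp
  ultimately show "pochhammer (- real M) n * pochhammer A n *
         (pochhammer (- real n) k * pochhammer a k * pochhammer b k /
          (pochhammer (- real M) k * pochhammer A k * fact k)) =
         hahn_coeff (real M) A n k * poch_pair a b k"
    by (simp add: pochhammer_minus_nat hahn_coeff_def poch_pair_def field_simps)
qed

theorem mainTheorem6:
  fixes N n :: nat and \<alpha> \<beta> :: real
  assumes "odd N"
    and "\<forall>k\<le>(N - 1) div 2. pochhammer ((\<alpha> + 1) / 2) k \<noteq> 0"
    and "\<forall>k\<le>(N - 1) div 2. pochhammer ((\<alpha> + 3) / 2) k \<noteq> 0"
    and "n \<le> (N - 1) div 2"
  shows "\<forall>x::real.
      dmH \<alpha> \<beta> N (2 * n) (x - 1) =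
        16 ^ n * pochhammer ((1 - real N) / 2) n * pochhammer ((\<alpha> + 1) / 2) n *
        hyp3F2 n ((\<alpha> + \<beta> + 2) / 4 + x / 4) ((\<alpha> + \<beta> + 2) / 4 - x / 4)
               (- (real N - 1) / 2) ((\<alpha> + 1) / 2)
    \<and> dmH \<alpha> \<beta> N (2 * n + 1) (x - 1) =
        16 ^ n * pochhammer ((1 - real N) / 2) n * pochhammer ((\<alpha> + 3) / 2) n *
        (x + \<alpha> - \<beta>) *
        hyp3F2 n ((\<alpha> + \<beta> + 2) / 4 + x / 4) ((\<alpha> + \<beta> + 2) / 4 - x / 4)
               (- (real N - 1) / 2) ((\<alpha> + 3) / 2)"
proof -
  define M where "M = (N - 1) div 2"
  have N: "real N = 2 * real M + 1"
    using \<open>odd N\<close> by (auto simp: M_def elim: oddE)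
  then have lower: "(1 - real N) / 2 = - real M" "- (real N - 1) / 2 = - real M" by simp_all
  have shift: "(\<alpha> + 3) / 2 = (\<alpha> + 1) / 2 + 1" by simp
  have "n \<le> M" using assms(4) by (simp add: M_def)
  then have "\<forall>k\<le>n. pochhammer ((\<alpha> + 1) / 2) k \<noteq> 0"
    and "\<forall>k\<le>n. pochhammer ((\<alpha> + 1) / 2 + 1) k \<noteq> 0"
    using assms(2,3) by (auto simp: M_def shift)
  note hyp3F2 = this[THEN hyp3F2_as_hahn_sum[OF \<open>n \<le> M\<close>]]
  show ?thesis
    using dmH_as_hahn_sum[OF N, where \<alpha> = \<alpha> and \<beta> = \<beta> and n = n]
    unfolding lower shift hyp3F2[symmetric] by (simp only: mult_ac simp_thms)
qed

end
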